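(* Let $m\ge 1$ and $n\ge 3$ be odd integers, $k=1$, and $g\ge3$. Then an $RSM_\Gamma(\Gamma,g;[\,^{8mn-1}m,\ ^{1}2n])$ exists.
   Context: Here $G=\mathbb{Z}_m\times\mathbb{Z}_{4n}$ and $\Gamma$ is the generalized dihedral group on $G$: underlying set $G\times\mathbb{Z}_2$ with operation $(x,\tau)+(x',\tau')=(x+(-1)^\tau x',\tau+\tau')$. $[\,^{a}x,\,^{b}y]$ denotes the multiset with $a$ copies of $x$ and $b$ copies of $y$. An $RSM_\Gamma(\Gamma,g;L)$, for a list $L$ of $|\Gamma|$ positive integers, is a $|\Gamma|\times g$ matrix with entries in $\Gamma$ such that each column is a permutation (arrangement) of $\Gamma$ and the multiset of orders of the left-to-right row sums equals $L$. *)

theory Defs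
  imports Main "HOL-Library.Multiset"
begin

text \<open>Generalized dihedral group on G = Z_m x Z_(4n). Elements are ((a,b),t) with
  0 <= a < m, 0 <= b < 4n and t :: bool encoding Z_2 (False = 0, True = 1).\<close>

type_synonym gdih = "(int \<times> int) \<times> bool"

definition gd_carrier :: "nat \<Rightarrow> nat \<Rightarrow> gdih set" where
  "gd_carrier m n = {((a,b),t). 0 \<le> a \<and> a < int m \<and> 0 \<le> b \<and> b < 4 * int n}"

fun gd_add :: "nat \<Rightarrow> nat \<Rightarrow> gdih \<Rightarrow> gdih \<Rightarrow> gdih" where
  "gd_add m n ((a,b),t) ((a',b'),t') =
     (((a + (if t then - a' else a')) mod int m,
       (b + (if t then - b' else b')) mod (4 * int n)),
      t \<noteq> t')"

definition gd_zero :: gdih where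
  "gd_zero = ((0,0),False)"

fun gd_pow :: "nat \<Rightarrow> nat \<Rightarrow> nat \<Rightarrow> gdih \<Rightarrow> gdih" where
  "gd_pow m n 0 x = gd_zero"
| "gd_pow m n (Suc k) x = gd_add m n (gd_pow m n k x) x"

definition gd_ord :: "nat \<Rightarrow> nat \<Rightarrow> gdih \<Rightarrow> nat" where
  "gd_ord m n x = (LEAST k. 0 < k \<and> gd_pow m n k x = gd_zero)"

definition row_sum :: "nat \<Rightarrow> nat \<Rightarrow> (nat \<Rightarrow> nat \<Rightarrow> gdih) \<Rightarrow> nat \<Rightarrow> nat \<Rightarrow> gdih" where
  "row_sum m n M g i = foldl (gd_add m n) gd_zero (map (M i) [0..<g])"

text \<open>RSM_Gamma(Gamma,g;L): a |Gamma| x g matrix (rows i < |Gamma|, columns j < g) whose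
  columns are arrangements of Gamma and whose row-sum orders form the multiset L.\<close>
definition is_RSM :: "nat \<Rightarrow> nat \<Rightarrow> nat \<Rightarrow> nat multiset \<Rightarrow> (nat \<Rightarrow> nat \<Rightarrow> gdih) \<Rightarrow> bool" where
  "is_RSM m n g L M \<longleftrightarrow>
     (\<forall>j<g. bij_betw (\<lambda>i. M i j) {..<card (gd_carrier m n)} (gd_carrier m n)) \<and>
     image_mset (\<lambda>i. gd_ord m n (row_sum m n M g i)) (mset [0..<card (gd_carrier m n)]) = L"

end

theory Submission
  imports Defs "HOL-Number_Theory.Cong"
begin

text \<open>Let \<open>\<phi>\<close> be the permutation \<open>orth\<close> of \<open>\<Gamma>\<close> defined below. For odd \<open>m\<close> the map
  \<open>x \<mapsto> x + \<phi>(x)\<close> is again a permutation, so the three columns \<open>x\<close>, \<open>\<phi>(x)\<close>,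
  \<open>-(x + \<phi>(x)) + u\<close> have every row summing to the rotation \<open>u = (1,0)\<close> of order \<open>m\<close>.
  Precomposing the second and third columns with mutually inverse 3-cycles on three elements
  \<open>r1, r2, r3\<close> changes only those three rows, whose sums become \<open>(0,2)\<close>, \<open>(-1,0)\<close>, \<open>(2,0)\<close>,
  of orders \<open>2n, m, m\<close>. Further columns come in pairs \<open>x, -x\<close>, which do not change row sums;
  for even \<open>g\<close> the third column \<open>z\<close> is first split as \<open>(z + \<phi>(z)) + (-\<phi>(z))\<close>.\<close>

definition cycle3 :: "'a \<Rightarrow> 'a \<Rightarrow> 'a \<Rightarrow> 'a \<Rightarrow> 'a" where
  "cycle3 a b c x = (if x = a then b else if x = b then c else if x = c then a else x)"

lemma bij_betw_cycle3:
  assumes "distinct [a, b, c]" "{a, b, c} \<subseteq> A"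
  shows "bij_betw (cycle3 a b c) A A"
  by (rule bij_betw_byWitness[where f' = "cycle3 a c b"]) (use assms in \<open>auto simp: cycle3_def\<close>)

lemma bij_betw_if_inj_on_endo:
  "finite A \<Longrightarrow> f ` A \<subseteq> A \<Longrightarrow> inj_on f A \<Longrightarrow> bij_betw f A A"
  by (simp add: bij_betw_def endo_inj_surj)

locale gen_dihedral =
  fixes m n :: nat
  assumes m_pos: "1 \<le> m" and n_pos: "1 \<le> n"
begin

abbreviation G :: "gdih set" where "G \<equiv> gd_carrier m n"
abbreviation add :: "gdih \<Rightarrow> gdih \<Rightarrow> gdih" (infixl "\<oplus>" 65) where "x \<oplus> y \<equiv> gd_add m n x y"

fun inv :: "gdih \<Rightarrow> gdih" where
  "inv ((a, b), t) = (if t then ((a, b), t) else ((- a mod int m, - b mod (4 * int n)), False))"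

lemma mem_G: "((a, b), t) \<in> G \<longleftrightarrow> 0 \<le> a \<and> a < int m \<and> 0 \<le> b \<and> b < 4 * int n"
  by (simp add: gd_carrier_def)

lemma G_eq: "G = ({0..<int m} \<times> {0..<4 * int n}) \<times> UNIV"
  by (auto simp: gd_carrier_def)

lemma finite_G: "finite G"
  by (simp add: G_eq)

lemma card_G: "card G = 8 * m * n"
  by (simp add: G_eq card_cartesian_product nat_mult_distrib)

lemma add_closed: "x \<oplus> y \<in> G"
  using m_pos n_pos by (cases x; cases y) (auto simp: mem_G)

lemma zero_closed: "gd_zero \<in> G"
  using m_pos n_pos by (simp add: gd_zero_def mem_G)

lemma add_assoc: "x \<oplus> y \<oplus> z = x \<oplus> (y \<oplus> z)"
  by (cases x; cases y; cases z) (auto simp: mod_simps algebra_simps)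

lemma zero_add: "x \<in> G \<Longrightarrow> gd_zero \<oplus> x = x"
  by (cases x) (auto simp: mem_G gd_zero_def)

lemma add_zero: "x \<in> G \<Longrightarrow> x \<oplus> gd_zero = x"
  by (cases x) (auto simp: mem_G gd_zero_def)

lemma add_inv: "x \<in> G \<Longrightarrow> x \<oplus> inv x = gd_zero"
  by (cases x) (auto simp: mem_G gd_zero_def mod_simps)

lemma inv_closed: "x \<in> G \<Longrightarrow> inv x \<in> G"
  using m_pos n_pos by (cases x) (auto simp: mem_G)

lemma inv_inv: "x \<in> G \<Longrightarrow> inv (inv x) = x"
  by (cases x) (auto simp: mem_G mod_simps)

lemma bij_betw_inv: "bij_betw inv G G"
  by (rule bij_betw_byWitness[where f' = inv]) (auto simp: inv_inv inv_closed simp del: inv.simps)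

lemma add_inv_cancel: "x \<in> G \<Longrightarrow> y \<in> G \<Longrightarrow> x \<oplus> y \<oplus> inv y = x"
  by (simp add: add_assoc add_inv add_zero)

lemma bij_betw_add_right:
  assumes "u \<in> G"
  shows "bij_betw (\<lambda>x. x \<oplus> u) G G"
proof (rule bij_betw_byWitness[where f' = "\<lambda>x. x \<oplus> inv u"])
  have "inv u \<oplus> u = gd_zero"
    using add_inv[OF inv_closed[OF assms]] inv_inv[OF assms] by simp
  then show "\<forall>y\<in>G. y \<oplus> inv u \<oplus> u = y"
    by (simp add: add_assoc add_zero)
qed (use assms in \<open>simp_all add: add_inv_cancel add_closed image_subset_iff\<close>)

lemma pow_rotation: "gd_pow m n k ((a, b), False) = (((int k * a) mod int m, (int k * b) mod (4 * int n)), False)"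
  by (induction k) (auto simp: gd_zero_def mod_simps algebra_simps)

lemma ord_eq_if_pow_eq_zero_iff:
  assumes "0 < d" "\<And>k. gd_pow m n k x = gd_zero \<longleftrightarrow> d dvd k"
  shows "gd_ord m n x = d"
  unfolding gd_ord_def assms(2) by (rule Least_equality) (use assms(1) in \<open>auto dest: dvd_imp_le\<close>)

lemma ord_rotation_coprime:
  assumes "coprime a (int m)"
  shows "gd_ord m n ((a mod int m, 0), False) = m"
proof (rule ord_eq_if_pow_eq_zero_iff)
  fix k
  have "gd_pow m n k ((a mod int m, 0), False) = gd_zero \<longleftrightarrow> [int k * a = 0] (mod int m)"
    by (simp add: pow_rotation gd_zero_def mod_simps cong_def)
  also have "\<dots> \<longleftrightarrow> m dvd k"
    using assms by (simp add: cong_0_iff coprime_commute coprime_dvd_mult_left_iff)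
  finally show "gd_pow m n k ((a mod int m, 0), False) = gd_zero \<longleftrightarrow> m dvd k" .
qed (use m_pos in simp)

lemma ord_rotation_two: "gd_ord m n ((0, 2), False) = 2 * n"
proof (rule ord_eq_if_pow_eq_zero_iff)
  fix k
  have "gd_pow m n k ((0, 2), False) = gd_zero \<longleftrightarrow> int (2 * n) * 2 dvd int k * 2"
    by (simp add: pow_rotation gd_zero_def dvd_eq_mod_eq_0 ac_simps)
  then show "gd_pow m n k ((0, 2), False) = gd_zero \<longleftrightarrow> 2 * n dvd k"
    by (simp only: dvd_mult_cancel_right int_dvd_int_iff) simp
qed (use n_pos in simp)

lemma uminus_mod_eq_iff:
  "0 \<le> i \<Longrightarrow> i < int m \<Longrightarrow> 0 \<le> j \<Longrightarrow> j < int m \<Longrightarrow> - i mod int m = - j mod int m \<longleftrightarrow> i = j"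
  by (metis cong_def cong_minus_minus_iff cong_less_imp_eq_int)

lemma double_mod_eq_iff:
  assumes "odd m" "0 \<le> i" "i < int m" "0 \<le> j" "j < int m"
  shows "(2 * i) mod int m = (2 * j) mod int m \<longleftrightarrow> i = j"
proof -
  have "coprime 2 (int m)" using assms(1) by simp
  then show ?thesis
    using assms(2-5) by (metis cong_def cong_mult_lcancel cong_less_imp_eq_int)
qed

lemma eq_if_dvd_diff_less: "(d::int) dvd x - y \<Longrightarrow> \<bar>x - y\<bar> < d \<Longrightarrow> x = y"
  using dvd_imp_le_int[of "x - y" d] by fastforce

fun orth :: "gdih \<Rightarrow> gdih" where
  "orth ((i, b), t) =
    (if \<not> t then
       if b < 2 * int n then ((i, b), False) else ((i, b - 2 * int n), True)
     else
       if b < 2 * int n then ((- i mod int m, 4 * int n - 1 - b), False)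
       else ((- i mod int m, 6 * int n - 1 - b), True))"

lemma orth_closed: "x \<in> G \<Longrightarrow> orth x \<in> G"
  using m_pos by (cases x) (auto simp: mem_G)

lemma inj_on_orth: "inj_on orth G"
proof (rule inj_onI)
  fix x y assume "x \<in> G" "y \<in> G" "orth x = orth y"
  then show "x = y"
    by (cases x; cases y) (auto simp: mem_G uminus_mod_eq_iff split: if_splits)
qed

lemma bij_betw_orth: "bij_betw orth G G"
  by (intro bij_betw_if_inj_on_endo finite_G inj_on_orth) (auto simp: orth_closed simp del: orth.simps)

definition orth_sum :: "gdih \<Rightarrow> gdih" where
  "orth_sum x = x \<oplus> orth x"

lemma orth_sum_eq:
  assumes "((i, b), t) \<in> G"
  shows "orth_sum ((i, b), t) =
    (((2 * i) mod int m, (2 * b + of_bool t + (if 2 * int n \<le> b then 2 * int n else 0)) mod (4 * int n)),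
     t \<noteq> (2 * int n \<le> b))"
  using assms by (auto simp: orth_sum_def mem_G mod_simps mod_eq_dvd_iff algebra_simps)

lemma inj_on_orth_sum:
  assumes "odd m"
  shows "inj_on orth_sum G"
proof (rule inj_onI)
  fix x y assume "x \<in> G" "y \<in> G" and eq: "orth_sum x = orth_sum y"
  obtain i b t j c s where xy: "x = ((i, b), t)" "y = ((j, c), s)"
    by (metis prod.collapse)
  have x: "((i, b), t) \<in> G" and y: "((j, c), s) \<in> G"
    using \<open>x \<in> G\<close> \<open>y \<in> G\<close> xy by simp_all
  define \<beta> where "\<beta> b t = 2 * b + of_bool t + (if 2 * int n \<le> b then 2 * int n else 0)" for b t
  have i: "(2 * i) mod int m = (2 * j) mod int m"
    and \<beta>: "\<beta> b t mod (4 * int n) = \<beta> c s mod (4 * int n)"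
    and half: "(t \<noteq> (2 * int n \<le> b)) = (s \<noteq> (2 * int n \<le> c))"
    using eq unfolding xy orth_sum_eq[OF x] orth_sum_eq[OF y] \<beta>_def by simp_all
  have parity: "even (\<beta> b t mod (4 * int n)) \<longleftrightarrow> \<not> t" for b t
    by (simp add: \<beta>_def even_mod_4_div_2 dvd_mod_iff)
  have "t = s"
    using parity[of b t] parity[of c s] \<beta> by simp
  with half have "(2 * int n \<le> b) = (2 * int n \<le> c)" by blast
  with \<beta> \<open>t = s\<close> have "2 * int n * 2 dvd (b - c) * 2"
    by (simp add: \<beta>_def mod_eq_dvd_iff algebra_simps split: if_splits)
  then have "2 * int n dvd b - c" by (metis dvd_mult_cancel_right zero_neq_numeral)
  moreover have "\<bar>b - c\<bar> < 2 * int n"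
    using x y \<open>(2 * int n \<le> b) = (2 * int n \<le> c)\<close> by (auto simp: mem_G)
  ultimately have "b = c" by (rule eq_if_dvd_diff_less)
  moreover have "i = j"
    using i x y double_mod_eq_iff[OF assms] by (simp add: mem_G)
  ultimately show "x = y"
    using xy \<open>t = s\<close> by simp
qed

lemma bij_betw_orth_sum: "odd m \<Longrightarrow> bij_betw orth_sum G G"
  by (intro bij_betw_if_inj_on_endo finite_G inj_on_orth_sum) (auto simp: orth_sum_def add_closed)

lemma orth_sum_add_inv_orth: "z \<in> G \<Longrightarrow> orth_sum z \<oplus> inv (orth z) = z"
  by (simp add: orth_sum_def add_inv_cancel orth_closed del: inv.simps)

definition row_value :: "(gdih \<Rightarrow> gdih) list \<Rightarrow> gdih \<Rightarrow> gdih" where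
  "row_value fs x = foldl (\<oplus>) gd_zero (map (\<lambda>f. f x) fs)"

lemma foldl_cancel_pairs:
  "a \<in> G \<Longrightarrow> x \<in> G \<Longrightarrow> foldl (\<oplus>) a (map (\<lambda>f. f x) (concat (replicate k [id, inv]))) = a"
  by (induction k) (simp_all add: add_inv_cancel del: inv.simps)

lemma foldl_closed: "a \<in> G \<Longrightarrow> foldl (\<oplus>) a xs \<in> G"
  by (induction xs arbitrary: a) (simp_all add: add_closed)

lemma row_value_append_pairs:
  "x \<in> G \<Longrightarrow> row_value (fs @ concat (replicate k [id, inv])) x = row_value fs x"
  by (simp add: row_value_def foldl_cancel_pairs foldl_closed zero_closed del: inv.simps)

lemma is_RSM_of_permutations:
  assumes "\<forall>f \<in> set fs. bij_betw f G G"
  shows "\<exists>M. is_RSM m n (length fs) (image_mset (\<lambda>x. gd_ord m n (row_value fs x)) (mset_set G)) M"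
proof -
  obtain e where e: "bij_betw e {..<card G} G"
    using ex_bij_betw_nat_finite[OF finite_G] lessThan_atLeast0 by metis
  define M where "M i j = (fs ! j) (e i)" for i j
  have "bij_betw (\<lambda>i. M i j) {..<card G} G" if "j < length fs" for j
    using bij_betw_trans[OF e, of "fs ! j" G] assms that by (simp add: M_def comp_def)
  moreover have "row_sum m n M (length fs) i = row_value fs (e i)" for i
  proof -
    have "map (M i) [0..<length fs] = map (\<lambda>f. f (e i)) fs"
      by (rule nth_equalityI) (simp_all add: M_def)
    then show ?thesis
      by (simp add: row_sum_def row_value_def)
  qed
  then have "image_mset (\<lambda>i. gd_ord m n (row_sum m n M (length fs) i)) (mset [0..<card G])
      = image_mset (\<lambda>x. gd_ord m n (row_value fs x)) (image_mset e (mset_set {..<card G}))"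
    by (simp add: image_mset.compositionality comp_def lessThan_atLeast0)
  moreover have "image_mset e (mset_set {..<card G}) = mset_set G"
    using e by (simp add: image_mset_mset_set bij_betw_def)
  ultimately show ?thesis
    unfolding is_RSM_def by auto
qed

end

locale twisted_rsm = gen_dihedral +
  assumes odd_m: "odd m" and n_ge_2: "2 \<le> n"
begin

definition r1 :: gdih where "r1 = ((0, int n - 1), False)"
definition r2 :: gdih where "r2 = ((0, 3 * int n - 2), True)"
definition r3 :: gdih where "r3 = ((1 mod int m, int n - 1), True)"

definition unit_rot :: gdih where "unit_rot = ((1 mod int m, 0), False)"

definition third_col :: "gdih \<Rightarrow> gdih" where
  "third_col x = inv (orth_sum (cycle3 r1 r2 r3 x)) \<oplus> unit_rot"

definition twisted_sum :: "gdih \<Rightarrow> gdih" where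
  "twisted_sum x = x \<oplus> orth (cycle3 r1 r3 r2 x) \<oplus> third_col x"

lemma distinct_r: "distinct [r1, r2, r3]"
  using n_pos by (auto simp: r1_def r2_def r3_def)

lemma r_in_G: "{r1, r2, r3} \<subseteq> G"
  using m_pos n_ge_2 by (auto simp: r1_def r2_def r3_def mem_G)

lemma twisted_sum_generic:
  assumes "x \<in> G" "x \<notin> {r1, r2, r3}"
  shows "twisted_sum x = unit_rot"
proof -
  have "x \<oplus> orth x \<oplus> inv (x \<oplus> orth x) = gd_zero"
    using add_closed add_inv by blast
  moreover have "unit_rot \<in> G"
    using m_pos n_pos by (simp add: unit_rot_def mem_G)
  ultimately show ?thesis
    using assms by (simp add: twisted_sum_def third_col_def cycle3_def orth_sum_def zero_add
        flip: add_assoc)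
qed

lemma twisted_sum_special:
  shows "twisted_sum r1 = ((0, 2), False)"
    and "twisted_sum r2 = ((- 1 mod int m, 0), False)"
    and "twisted_sum r3 = ((2 mod int m, 0), False)"
  using n_ge_2 distinct_r
  by (simp_all add: twisted_sum_def third_col_def cycle3_def orth_sum_def,
      simp_all add: r1_def r2_def r3_def unit_rot_def mod_simps)

lemma ord_twisted_sum:
  assumes "x \<in> G"
  shows "gd_ord m n (twisted_sum x) = (if x = r1 then 2 * n else m)"
proof -
  consider "x = r1" | "x = r2" | "x = r3" | "x \<notin> {r1, r2, r3}" by blast
  then show ?thesis
  proof cases
    case 1
    then show ?thesis by (simp add: twisted_sum_special(1) ord_rotation_two)
  next
    case 2
    then show ?thesis
      using distinct_r ord_rotation_coprime[of "- 1"] by (auto simp: twisted_sum_special(2))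
  next
    case 3
    have "coprime 2 (int m)" using odd_m by simp
    then show ?thesis
      using 3 distinct_r ord_rotation_coprime[of 2] by (auto simp: twisted_sum_special(3))
  next
    case 4
    then show ?thesis
      using assms ord_rotation_coprime[of 1] by (auto simp: twisted_sum_generic unit_rot_def)
  qed
qed

lemma image_mset_ord_twisted_sum:
  "image_mset (\<lambda>x. gd_ord m n (twisted_sum x)) (mset_set G) = replicate_mset (8 * m * n - 1) m + {#2 * n#}"
proof -
  have r1: "r1 \<in> G" using r_in_G by simp
  have "image_mset (\<lambda>x. gd_ord m n (twisted_sum x)) (mset_set G)
      = add_mset (2 * n) (image_mset (\<lambda>x. gd_ord m n (twisted_sum x)) (mset_set (G - {r1})))"
    by (subst mset_set.remove[OF finite_G r1]) (simp add: ord_twisted_sum r1)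
  also have "image_mset (\<lambda>x. gd_ord m n (twisted_sum x)) (mset_set (G - {r1}))
      = image_mset (\<lambda>x. m) (mset_set (G - {r1}))"
    by (rule image_mset_cong) (simp add: finite_G ord_twisted_sum)
  also have "\<dots> = replicate_mset (card (G - {r1})) m"
    by (simp add: image_mset_const_eq)
  also have "card (G - {r1}) = 8 * m * n - 1"
    using r1 finite_G by (simp add: card_G)
  finally show ?thesis by simp
qed

lemma bij_betw_third_col: "bij_betw third_col G G"
proof -
  have "bij_betw ((\<lambda>y. y \<oplus> unit_rot) \<circ> inv \<circ> orth_sum \<circ> cycle3 r1 r2 r3) G G"
    using m_pos n_pos odd_m
    by (intro bij_betw_trans[where B = G] bij_betw_cycle3 distinct_r r_in_G bij_betw_orth_sum bij_betw_inv
        bij_betw_add_right) (simp_all add: unit_rot_def mem_G)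
  then show ?thesis
    by (simp add: third_col_def[abs_def] comp_def)
qed

definition columns :: "nat \<Rightarrow> (gdih \<Rightarrow> gdih) list" where
  "columns g =
    (if odd g then [id, orth \<circ> cycle3 r1 r3 r2, third_col]
     else [id, orth \<circ> cycle3 r1 r3 r2, orth_sum \<circ> third_col, inv \<circ> orth \<circ> third_col])
    @ concat (replicate ((g - 3) div 2) [id, inv])"

lemma length_columns: "3 \<le> g \<Longrightarrow> length (columns g) = g"
  by (simp add: columns_def length_concat sum_list_replicate) presburger

lemma bij_betw_columns:
  assumes "f \<in> set (columns g)"
  shows "bij_betw f G G"
proof -
  have "distinct [r1, r3, r2]" using distinct_r by auto
  then have "bij_betw (orth \<circ> cycle3 r1 r3 r2) G G"
    using r_in_G by (intro bij_betw_trans[where B = G] bij_betw_cycle3 bij_betw_orth) auto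
  moreover have "bij_betw (orth_sum \<circ> third_col) G G"
    using odd_m by (intro bij_betw_trans[where B = G] bij_betw_third_col bij_betw_orth_sum)
  moreover have "bij_betw (inv \<circ> orth \<circ> third_col) G G"
    by (intro bij_betw_trans[where B = G] bij_betw_third_col bij_betw_orth bij_betw_inv)
  ultimately show ?thesis
    using assms bij_betw_third_col bij_betw_inv bij_betw_id
    by (auto simp: columns_def split: if_splits)
qed

lemma row_value_columns:
  assumes "x \<in> G"
  shows "row_value (columns g) x = twisted_sum x"
proof -
  have "third_col x \<in> G"
    by (simp add: third_col_def add_closed)
  then show ?thesis
    using assms
    by (simp add: columns_def row_value_append_pairs, simp add: row_value_def twisted_sum_def zero_add
        add_assoc orth_sum_add_inv_orth del: inv.simps)
qed

end

theorem mainTheorem12: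
  fixes m n g :: nat
  assumes "m \<ge> 1" "odd m" "n \<ge> 3" "odd n" "g \<ge> 3"
  shows "\<exists>M. is_RSM m n g (replicate_mset (8*m*n - 1) m + {#2*n#}) M"
proof -
  interpret twisted_rsm m n
    using assms by unfold_locales auto
  have "\<exists>M. is_RSM m n (length (columns g))
      (image_mset (\<lambda>x. gd_ord m n (row_value (columns g) x)) (mset_set G)) M"
    using bij_betw_columns by (intro is_RSM_of_permutations) blast
  moreover have "image_mset (\<lambda>x. gd_ord m n (row_value (columns g) x)) (mset_set G)
      = image_mset (\<lambda>x. gd_ord m n (twisted_sum x)) (mset_set G)"
    using finite_G by (intro image_mset_cong) (simp add: row_value_columns)
  ultimately show ?thesis
    using \<open>g \<ge> 3\<close> by (simp add: length_columns image_mset_ord_twisted_sum)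
qed

end
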